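(* Let $V_1,V_2,V_3$ be closed subspaces of a Hilbert space $\mathcal H$ such that for each pair $i\ne j$ neither of $V_i,V_j$ contains the other, and let $0<\alpha_{ij}\le\angle(V_i,V_j)$ with $\varepsilon_{ij}=\cos\alpha_{ij}$ ($\alpha_{ij}=\alpha_{ji}$). Suppose $\varepsilon_{12}^2+\varepsilon_{23}^2+\varepsilon_{13}^2+2\varepsilon_{12}\varepsilon_{23}\varepsilon_{13}<1$. For $v\in\mathcal H$ let $d_i(v)$ be the distance from $v$ to $V_i$ and $d_0(v)$ the distance from $v$ to $V_1\cap V_2\cap V_3$. Then for every $v\in\mathcal H$, $d_0(v)^2\le\begin{pmatrix}d_1(v)&d_2(v)&d_3(v)\end{pmatrix}\begin{pmatrix}1&-\varepsilon_{12}&-\varepsilon_{13}\\-\varepsilon_{12}&1&-\varepsilon_{23}\\-\varepsilon_{13}&-\varepsilon_{23}&1\end{pmatrix}^{-1}\begin{pmatrix}d_1(v)\\d_2(v)\\d_3(v)\end{pmatrix}$.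
   Context: For closed subspaces $W_1,W_2$ neither of which contains the other, the (Friederichs) angle $\angle(W_1,W_2)\in[0,\pi/2]$ is defined by $\cos\angle(W_1,W_2)=\sup\{|\langle w_1,w_2\rangle| : w_i\in W_i,\ \|w_i\|=1,\ w_i\perp W_1\cap W_2\}$. *)

theory Defs
  imports "HOL-Analysis.Analysis"
begin

text \<open>Cosine of the Friedrichs angle between two closed subspaces (neither containing the other).\<close>
definition cos_friedrichs_angle :: "'a::real_inner set \<Rightarrow> 'a set \<Rightarrow> real" where
  "cos_friedrichs_angle W1 W2 =
     Sup {\<bar>w1 \<bullet> w2\<bar> | w1 w2. w1 \<in> W1 \<and> w2 \<in> W2 \<and> norm w1 = 1 \<and> norm w2 = 1
            \<and> (\<forall>u\<in>W1 \<inter> W2. w1 \<bullet> u = 0) \<and> (\<forall>u\<in>W1 \<inter> W2. w2 \<bullet> u = 0)}"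

definition friedrichs_angle :: "'a::real_inner set \<Rightarrow> 'a set \<Rightarrow> real" where
  "friedrichs_angle W1 W2 = arccos (cos_friedrichs_angle W1 W2)"

definition closed_subspace :: "'a::real_normed_vector set \<Rightarrow> bool" where
  "closed_subspace V \<longleftrightarrow> subspace V \<and> closed V"

end

theory Submission
  imports Defs
begin

text \<open>
  Let \<open>W = V1 \<inter> V2 \<inter> V3\<close> and let \<open>u = v - p\<close> with \<open>p\<close> the orthogonal projection of \<open>v\<close>
  onto \<open>W\<close>. Since \<open>W\<^sup>\<bottom>\<close> is the closure of \<open>V1\<^sup>\<bottom> + V2\<^sup>\<bottom> + V3\<^sup>\<bottom>\<close>, \<open>u\<close> is a limit of
  sums \<open>s = y1 + y2 + y3\<close> with \<open>yi \<in> Vi\<^sup>\<bottom>\<close>, and these can be normalized so that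
  \<open>\<bar>yi \<bullet> yj\<bar> \<le> \<epsilon>ij * norm yi * norm yj\<close>: the Friedrichs angle between complements is at
  least the one between the subspaces. For such \<open>s\<close> one has \<open>v \<bullet> yi \<le> di * norm yi\<close>, and
  \<open>norm s\<^sup>2\<close> dominates the quadratic form of the matrix \<open>M\<close> evaluated at the vector \<open>n\<close> of
  the norms \<open>norm yi\<close>. Hence
  \<open>norm u\<^sup>2 - norm (u - s)\<^sup>2 = 2 * (v \<bullet> s) - norm s\<^sup>2 \<le> 2 * (d \<bullet> n) - n \<bullet> (M *v n) \<le> d \<bullet> (M\<^sup>-\<^sup>1 *v d)\<close>,
  and letting \<open>s\<close> tend to \<open>u\<close> gives the bound, as \<open>infdist v W \<le> norm u\<close>.
\<close>

section \<open>Orthogonal projection onto closed subspaces\<close>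

lemma Cauchy_if_dist_sq_le:
  fixes f :: "nat \<Rightarrow> 'a::metric_space"
  assumes "\<And>m n. (dist (f m) (f n))\<^sup>2 \<le> g m + g n" "g \<longlonglongrightarrow> 0"
  shows "Cauchy f"
proof (rule metric_CauchyI)
  fix e :: real assume "e > 0"
  then have "\<forall>\<^sub>F n in sequentially. g n < e\<^sup>2 / 2" by (intro order_tendstoD(2)[OF assms(2)]) simp
  then obtain N where N: "\<And>n. N \<le> n \<Longrightarrow> g n < e\<^sup>2 / 2" by (auto simp: eventually_sequentially)
  have "dist (f m) (f n) < e" if "N \<le> m" "N \<le> n" for m n
  proof -
    have "(dist (f m) (f n))\<^sup>2 < e\<^sup>2" using assms(1)[of m n] N[OF that(1)] N[OF that(2)] by linarith
    then show ?thesis using \<open>e > 0\<close> by (simp add: power2_less_imp_less)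
  qed
  then show "\<exists>N. \<forall>m\<ge>N. \<forall>n\<ge>N. dist (f m) (f n) < e" by blast
qed

lemma dist_sq_le_infdist_convex:
  fixes S :: "'a::real_inner set"
  assumes "convex S" "s \<in> S" "t \<in> S"
  shows "(dist s t)\<^sup>2 \<le> 2 * (dist x s)\<^sup>2 + 2 * (dist x t)\<^sup>2 - 4 * (infdist x S)\<^sup>2"
proof -
  have "(1/2) *\<^sub>R s + (1/2) *\<^sub>R t \<in> S" using assms by (intro convexD) auto
  then have "2 * infdist x S \<le> 2 * dist x ((1/2) *\<^sub>R s + (1/2) *\<^sub>R t)" by (simp add: infdist_le)
  also have "\<dots> = norm ((x - s) + (x - t))"
  proof -
    have "(x - s) + (x - t) = 2 *\<^sub>R (x - ((1/2) *\<^sub>R s + (1/2) *\<^sub>R t))"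
      by (simp add: algebra_simps scaleR_2)
    then show ?thesis by (simp add: dist_norm)
  qed
  finally have "(2 * infdist x S)\<^sup>2 \<le> (norm ((x - s) + (x - t)))\<^sup>2"
    by (intro power_mono) (auto simp: infdist_nonneg)
  moreover have "(norm (s - t))\<^sup>2 + (norm ((x - s) + (x - t)))\<^sup>2
      = 2 * (norm (x - s))\<^sup>2 + 2 * (norm (x - t))\<^sup>2"
    by (simp add: power2_norm_eq_inner inner_simps algebra_simps)
  ultimately show ?thesis by (simp add: dist_norm power_mult_distrib)
qed

lemma nearest_point_exists:
  fixes S :: "'a::{real_inner,complete_space} set"
  assumes "closed S" "convex S" "S \<noteq> {}"
  shows "\<exists>p\<in>S. \<forall>s\<in>S. dist x p \<le> dist x s"
proof -
  define d where "d = infdist x S"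
  have "d \<ge> 0" unfolding d_def by (rule infdist_nonneg)
  have "\<exists>s\<in>S. (dist x s)\<^sup>2 < d\<^sup>2 + inverse (Suc n)" for n
  proof -
    define r where "r = sqrt (d\<^sup>2 + inverse (Suc n))"
    have "d < r"
      unfolding r_def using \<open>d \<ge> 0\<close> real_sqrt_less_mono[of "d\<^sup>2" "d\<^sup>2 + inverse (Suc n)"] by simp
    then obtain s where "s \<in> S" "dist x s < r"
      using cInf_lessD[of "dist x ` S" r] assms(3) by (auto simp: d_def infdist_notempty)
    then have "(dist x s)\<^sup>2 < r\<^sup>2" by (simp add: power_strict_mono)
    then show ?thesis using \<open>s \<in> S\<close> unfolding r_def by auto
  qed
  then obtain f where f_in: "\<And>n. f n \<in> S" and f_dist: "\<And>n. (dist x (f n))\<^sup>2 < d\<^sup>2 + inverse (Suc n)"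
    by metis
  have "(dist (f m) (f n))\<^sup>2 \<le> 2 * inverse (Suc m) + 2 * inverse (Suc n)" for m n
    using dist_sq_le_infdist_convex[OF assms(2) f_in[of m] f_in[of n], of x] f_dist[of m] f_dist[of n]
    unfolding d_def by linarith
  moreover have "(\<lambda>n. 2 * inverse (real (Suc n))) \<longlonglongrightarrow> 0"
    using tendsto_mult_right_zero[OF LIMSEQ_inverse_real_of_nat] .
  ultimately have "Cauchy f" by (rule Cauchy_if_dist_sq_le)
  then obtain p where p: "f \<longlonglongrightarrow> p" using Cauchy_convergent_iff convergent_def by blast
  have "(\<lambda>n. (dist x (f n))\<^sup>2) \<longlonglongrightarrow> (dist x p)\<^sup>2" by (intro tendsto_intros p)
  moreover have "(\<lambda>n. d\<^sup>2 + inverse (Suc n)) \<longlonglongrightarrow> d\<^sup>2"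
    using tendsto_add[OF tendsto_const LIMSEQ_inverse_real_of_nat] by simp
  ultimately have "(dist x p)\<^sup>2 \<le> d\<^sup>2"
    using f_dist by (intro LIMSEQ_le) (auto intro: less_imp_le)
  then have "dist x p \<le> d" using \<open>d \<ge> 0\<close> by (rule power2_le_imp_le)
  moreover have "p \<in> S" using closed_sequentially[OF assms(1) f_in p] .
  ultimately show ?thesis using infdist_le[of _ S x] unfolding d_def by (meson order_trans)
qed

lemma nearest_point_orthogonal:
  fixes S :: "'a::real_inner set"
  assumes "subspace S" "p \<in> S" "\<And>s. s \<in> S \<Longrightarrow> dist x p \<le> dist x s"
  shows "x - p \<in> S\<^sup>\<bottom>"
  unfolding orthogonal_comp_def orthogonal_def
proof (intro CollectI ballI)
  fix s assume "s \<in> S"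
  show "s \<bullet> (x - p) = 0"
  proof (cases "s = 0")
    case False
    then have "0 < s \<bullet> s" by simp
    define a where "a = s \<bullet> (x - p)"
    define t where "t = a / (s \<bullet> s)"
    have "p + t *\<^sub>R s \<in> S" using assms(1,2) \<open>s \<in> S\<close> by (simp add: subspace_add subspace_scale)
    then have "(norm (x - p))\<^sup>2 \<le> (norm ((x - p) - t *\<^sub>R s))\<^sup>2"
      using assms(3) by (simp add: dist_norm power_mono diff_diff_eq)
    also have "\<dots> = (norm (x - p))\<^sup>2 - 2 * t * a + t\<^sup>2 * (s \<bullet> s)"
      unfolding power2_norm_eq_inner a_def
      by (simp add: inner_diff_left inner_diff_right inner_commute algebra_simps power2_eq_square)
    also have "\<dots> = (norm (x - p))\<^sup>2 - a\<^sup>2 / (s \<bullet> s)"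
      unfolding t_def using \<open>0 < s \<bullet> s\<close> by (simp add: field_simps power2_eq_square)
    finally have "a\<^sup>2 \<le> 0" using \<open>0 < s \<bullet> s\<close> by (simp add: divide_le_0_iff)
    then show ?thesis unfolding a_def by simp
  qed simp
qed

lemma orthogonal_projection_exists:
  fixes S :: "'a::{real_inner,complete_space} set"
  assumes "subspace S" "closed S"
  obtains p where "p \<in> S" "x - p \<in> S\<^sup>\<bottom>"
  using nearest_point_exists[OF assms(2) subspace_imp_convex[OF assms(1)]] assms(1)
  by (metis nearest_point_orthogonal empty_iff subspace_0)

lemma orthogonal_comp_iff: "x \<in> W\<^sup>\<bottom> \<longleftrightarrow> (\<forall>w\<in>W. x \<bullet> w = 0)"
  by (auto simp: orthogonal_comp_def orthogonal_def inner_commute)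

lemma closed_orthogonal_comp: "closed (W\<^sup>\<bottom>)"
proof -
  have "W\<^sup>\<bottom> = (\<Inter>w\<in>W. {x. w \<bullet> x = 0})" by (auto simp: orthogonal_comp_def orthogonal_def)
  then show ?thesis by (auto intro!: closed_INT closed_hyperplane)
qed

lemma orthogonal_comp_orthogonal_comp:
  fixes S :: "'a::{real_inner,complete_space} set"
  assumes "subspace S" "closed S"
  shows "S\<^sup>\<bottom>\<^sup>\<bottom> = S"
proof
  show "S\<^sup>\<bottom>\<^sup>\<bottom> \<subseteq> S"
  proof
    fix x assume x: "x \<in> S\<^sup>\<bottom>\<^sup>\<bottom>"
    obtain p where "p \<in> S" "x - p \<in> S\<^sup>\<bottom>" using orthogonal_projection_exists[OF assms] .
    then have "x - p \<in> S\<^sup>\<bottom>\<^sup>\<bottom>"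
      using x orthogonal_comp_subset subspace_diff subspace_orthogonal_comp by blast
    then have "x - p = 0"
      using \<open>x - p \<in> S\<^sup>\<bottom>\<close> orthogonal_Int_0[OF subspace_orthogonal_comp] by blast
    then show "x \<in> S" using \<open>p \<in> S\<close> by simp
  qed
qed (rule orthogonal_comp_subset)

lemma subspace_closure:
  fixes S :: "'a::real_normed_vector set"
  assumes "subspace S"
  shows "subspace (closure S)"
  unfolding subspace_def
proof (intro conjI ballI allI)
  show "0 \<in> closure S" using assms closure_subset subspace_0 by blast
next
  fix x y assume "x \<in> closure S" "y \<in> closure S"
  then obtain f g where "\<And>n. f n \<in> S" "f \<longlonglongrightarrow> x" "\<And>n. g n \<in> S" "g \<longlonglongrightarrow> y"
    by (auto simp: closure_sequential)
  then show "x + y \<in> closure S"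
    unfolding closure_sequential using assms by (intro exI[of _ "\<lambda>n. f n + g n"]) (auto intro: tendsto_add subspace_add)
next
  fix c :: real and x assume "x \<in> closure S"
  then obtain f where "\<And>n. f n \<in> S" "f \<longlonglongrightarrow> x" by (auto simp: closure_sequential)
  then show "c *\<^sub>R x \<in> closure S"
    unfolding closure_sequential using assms by (intro exI[of _ "\<lambda>n. c *\<^sub>R f n"]) (auto intro: tendsto_scaleR subspace_scale)
qed

lemma orthogonal_comp_orthogonal_comp_subset_closure:
  fixes S :: "'a::{real_inner,complete_space} set"
  assumes "subspace S"
  shows "S\<^sup>\<bottom>\<^sup>\<bottom> \<subseteq> closure S"
proof -
  have "S\<^sup>\<bottom>\<^sup>\<bottom> \<subseteq> (closure S)\<^sup>\<bottom>\<^sup>\<bottom>"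
    by (intro orthogonal_comp_anti_mono closure_subset)
  also have "\<dots> = closure S"
    using subspace_closure[OF assms] by (simp add: orthogonal_comp_orthogonal_comp)
  finally show ?thesis .
qed

lemma subspace_set_plus:
  assumes "subspace A" "subspace B"
  shows "subspace (A + B)"
proof -
  have "A + B = {a + b |a b. a \<in> A \<and> b \<in> B}" by (auto simp: set_plus_def)
  then show ?thesis using subspace_sums[OF assms] by simp
qed

lemma set_plus_subset_left: "0 \<in> B \<Longrightarrow> A \<subseteq> A + (B :: 'a::comm_monoid_add set)"
  using set_zero_plus2[of B A] by (simp add: add.commute)

lemma orthogonal_comp_set_plus:
  fixes A B :: "'a::real_inner set"
  assumes "0 \<in> A" "0 \<in> B"
  shows "(A + B)\<^sup>\<bottom> = A\<^sup>\<bottom> \<inter> B\<^sup>\<bottom>"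
proof
  have "A \<subseteq> A + B" "B \<subseteq> A + B"
    using assms by (simp_all add: set_plus_subset_left set_zero_plus2)
  then show "(A + B)\<^sup>\<bottom> \<subseteq> A\<^sup>\<bottom> \<inter> B\<^sup>\<bottom>" using orthogonal_comp_anti_mono by blast
  show "A\<^sup>\<bottom> \<inter> B\<^sup>\<bottom> \<subseteq> (A + B)\<^sup>\<bottom>"
    by (auto simp: orthogonal_comp_iff set_plus_def inner_add_right)
qed

lemma inner_le_infdist_mult_norm:
  fixes V :: "'a::real_inner set"
  assumes "V \<noteq> {}" "y \<in> V\<^sup>\<bottom>"
  shows "x \<bullet> y \<le> infdist x V * norm y"
proof -
  have bound: "x \<bullet> y \<le> dist x v * norm y" if "v \<in> V" for v
  proof -
    have "x \<bullet> y = (x - v) \<bullet> y"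
      using assms(2) that by (simp add: orthogonal_comp_def orthogonal_def inner_diff_left)
    also have "\<dots> \<le> dist x v * norm y" by (simp add: dist_norm norm_cauchy_schwarz)
    finally show ?thesis .
  qed
  show ?thesis
  proof (cases "y = 0")
    case False
    then have "x \<bullet> y / norm y \<le> infdist x V"
      unfolding infdist_notempty[OF assms(1)] using bound
      by (intro cINF_greatest[OF assms(1)]) (simp add: divide_le_eq)
    then show ?thesis using False by (simp add: divide_le_eq)
  qed simp
qed

section \<open>Friedrichs angles\<close>

text \<open>A supremum-free form of \<open>cos_friedrichs_angle M N \<le> c\<close>.\<close>

definition friedrichs_cos_le :: "'a::real_inner set \<Rightarrow> 'a set \<Rightarrow> real \<Rightarrow> bool" where
  "friedrichs_cos_le M N c \<longleftrightarrow>
     (\<forall>m \<in> M \<inter> (M \<inter> N)\<^sup>\<bottom>. \<forall>n \<in> N \<inter> (M \<inter> N)\<^sup>\<bottom>. \<bar>m \<bullet> n\<bar> \<le> c * norm m * norm n)"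

lemma friedrichs_cos_le_commute:
  "friedrichs_cos_le M N c \<Longrightarrow> friedrichs_cos_le N M c"
  unfolding friedrichs_cos_le_def by (metis Int_commute inner_commute mult.commute mult.left_commute)

lemma friedrichs_cos_le_mono:
  "friedrichs_cos_le M N c \<Longrightarrow> c \<le> c' \<Longrightarrow> friedrichs_cos_le M N c'"
  unfolding friedrichs_cos_le_def by (meson mult_right_mono norm_ge_zero order_trans)

lemma exists_unit_orthogonal_to_Int:
  fixes V W :: "'a::{real_inner,complete_space} set"
  assumes "subspace V" "closed V" "subspace W" "closed W" "\<not> V \<subseteq> W"
  obtains w where "w \<in> V" "norm w = 1" "w \<in> (V \<inter> W)\<^sup>\<bottom>"
proof -
  obtain x where "x \<in> V" "x \<notin> W" using assms(5) by blast
  obtain q where q: "q \<in> V \<inter> W" "x - q \<in> (V \<inter> W)\<^sup>\<bottom>"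
    using orthogonal_projection_exists[of "V \<inter> W"] assms(1-4) by (blast intro: subspace_inter)
  have "x - q \<in> V" "x - q \<noteq> 0"
    using \<open>x \<in> V\<close> \<open>x \<notin> W\<close> q(1) assms(1) by (auto intro: subspace_diff)
  then show ?thesis
    using that[of "(1 / norm (x - q)) *\<^sub>R (x - q)"] q(2) assms(1)
    by (simp add: subspace_scale subspace_orthogonal_comp[THEN subspace_scale])
qed

lemma abs_inner_of_units_le_1:
  assumes "r \<in> {\<bar>w1 \<bullet> w2\<bar> | w1 w2. w1 \<in> V \<and> w2 \<in> W \<and> norm w1 = 1 \<and> norm w2 = 1 \<and> P w1 w2}"
  shows "r \<le> 1"
proof -
  obtain w1 w2 :: 'a where "r = \<bar>w1 \<bullet> w2\<bar>" "norm w1 = 1" "norm w2 = 1" using assms by blast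
  then show ?thesis using Cauchy_Schwarz_ineq2[of w1 w2] by simp
qed

lemma cos_friedrichs_angle_unit_interval:
  fixes V W :: "'a::{real_inner,complete_space} set"
  assumes "closed_subspace V" "closed_subspace W" "\<not> V \<subseteq> W" "\<not> W \<subseteq> V"
  shows "0 \<le> cos_friedrichs_angle V W" "cos_friedrichs_angle V W \<le> 1"
proof -
  define S where "S = {\<bar>w1 \<bullet> w2\<bar> | w1 w2. w1 \<in> V \<and> w2 \<in> W \<and> norm w1 = 1 \<and> norm w2 = 1
            \<and> (\<forall>u\<in>V \<inter> W. w1 \<bullet> u = 0) \<and> (\<forall>u\<in>V \<inter> W. w2 \<bullet> u = 0)}"
  have cos_eq: "cos_friedrichs_angle V W = Sup S" unfolding S_def cos_friedrichs_angle_def ..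
  have le_1: "r \<le> 1" if "r \<in> S" for r
    using that unfolding S_def by (rule abs_inner_of_units_le_1)
  obtain w1 where "w1 \<in> V" "norm w1 = 1" "w1 \<in> (V \<inter> W)\<^sup>\<bottom>"
    using exists_unit_orthogonal_to_Int assms unfolding closed_subspace_def by metis
  moreover obtain w2 where "w2 \<in> W" "norm w2 = 1" "w2 \<in> (W \<inter> V)\<^sup>\<bottom>"
    using exists_unit_orthogonal_to_Int assms unfolding closed_subspace_def by metis
  ultimately have "\<bar>w1 \<bullet> w2\<bar> \<in> S"
    unfolding S_def by (auto simp: orthogonal_comp_iff Int_commute)
  moreover have "bdd_above S" using le_1 by (rule bdd_aboveI)
  ultimately show "0 \<le> cos_friedrichs_angle V W"
    unfolding cos_eq by (meson abs_ge_zero cSup_upper order_trans)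
  show "cos_friedrichs_angle V W \<le> 1"
    unfolding cos_eq using \<open>\<bar>w1 \<bullet> w2\<bar> \<in> S\<close> le_1 by (intro cSup_least) auto
qed

lemma friedrichs_cos_le_cos_friedrichs_angle:
  assumes "subspace V" "subspace W"
  shows "friedrichs_cos_le V W (cos_friedrichs_angle V W)"
  unfolding friedrichs_cos_le_def
proof (intro ballI)
  define S where "S = {\<bar>w1 \<bullet> w2\<bar> | w1 w2. w1 \<in> V \<and> w2 \<in> W \<and> norm w1 = 1 \<and> norm w2 = 1
            \<and> (\<forall>u\<in>V \<inter> W. w1 \<bullet> u = 0) \<and> (\<forall>u\<in>V \<inter> W. w2 \<bullet> u = 0)}"
  have "bdd_above S"
    unfolding S_def by (rule bdd_aboveI[of _ 1]) (rule abs_inner_of_units_le_1)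
  fix m n assume m: "m \<in> V \<inter> (V \<inter> W)\<^sup>\<bottom>" and n: "n \<in> W \<inter> (V \<inter> W)\<^sup>\<bottom>"
  show "\<bar>m \<bullet> n\<bar> \<le> cos_friedrichs_angle V W * norm m * norm n"
  proof (cases "m = 0 \<or> n = 0")
    case False
    let ?m = "(1 / norm m) *\<^sub>R m" and ?n = "(1 / norm n) *\<^sub>R n"
    have "?m \<in> V" "?n \<in> W" "norm ?m = 1" "norm ?n = 1"
      "\<forall>u\<in>V \<inter> W. ?m \<bullet> u = 0" "\<forall>u\<in>V \<inter> W. ?n \<bullet> u = 0"
      using m n False assms by (auto simp: subspace_scale orthogonal_comp_iff)
    then have "\<bar>?m \<bullet> ?n\<bar> \<in> S" unfolding S_def by blast
    then have "\<bar>?m \<bullet> ?n\<bar> \<le> Sup S" using \<open>bdd_above S\<close> by (rule cSup_upper)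
    moreover have "Sup S = cos_friedrichs_angle V W" unfolding S_def cos_friedrichs_angle_def ..
    moreover have "\<bar>?m \<bullet> ?n\<bar> = \<bar>m \<bullet> n\<bar> / (norm m * norm n)" by (simp add: abs_mult)
    ultimately have "\<bar>m \<bullet> n\<bar> / (norm m * norm n) \<le> cos_friedrichs_angle V W" by argo
    then show ?thesis using False by (simp add: divide_le_eq mult.assoc)
  qed auto
qed

lemma friedrichs_cos_le_cos:
  fixes V W :: "'a::{real_inner,complete_space} set"
  assumes "closed_subspace V" "closed_subspace W" "\<not> V \<subseteq> W" "\<not> W \<subseteq> V"
    and "0 < a" "a \<le> friedrichs_angle V W"
  shows "friedrichs_cos_le V W (cos a)" "0 \<le> cos a"
proof -
  let ?c = "cos_friedrichs_angle V W"
  have c: "0 \<le> ?c" "?c \<le> 1" using cos_friedrichs_angle_unit_interval[OF assms(1-4)] by auto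
  then have "a \<le> pi / 2" using assms(6) arccos_le_pi2 unfolding friedrichs_angle_def by fastforce
  then show "0 \<le> cos a" using assms(5) by (intro cos_ge_zero) auto
  have "cos (arccos ?c) \<le> cos a"
    using assms(5,6) c \<open>a \<le> pi / 2\<close> arccos_le_pi2[of ?c]
    by (intro cos_monotone_0_pi_le) (auto simp: friedrichs_angle_def)
  then have "?c \<le> cos a" using c by simp
  moreover have "friedrichs_cos_le V W ?c"
    using assms(1,2) by (intro friedrichs_cos_le_cos_friedrichs_angle) (auto simp: closed_subspace_def)
  ultimately show "friedrichs_cos_le V W (cos a)" by (rule friedrichs_cos_le_mono[rotated])
qed

lemma friedrichs_norm_add_lower_bound:
  fixes M N :: "'a::{real_inner,complete_space} set"
  assumes "subspace M" "closed M" "subspace N" "closed N" "friedrichs_cos_le M N c"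
    and "m \<in> M" "m \<in> (M \<inter> N)\<^sup>\<bottom>" "n \<in> N"
  shows "(1 - c\<^sup>2) * (norm m)\<^sup>2 \<le> (norm (m + n))\<^sup>2"
proof -
  obtain n0 where n0: "n0 \<in> M \<inter> N" "n - n0 \<in> (M \<inter> N)\<^sup>\<bottom>"
    using orthogonal_projection_exists[of "M \<inter> N"] assms(1-4) by (blast intro: subspace_inter)
  define n1 where "n1 = n - n0"
  have "n1 \<in> N" unfolding n1_def using assms(3,8) n0(1) subspace_diff by blast
  then have "\<bar>m \<bullet> n1\<bar> \<le> c * norm m * norm n1"
    using assms(5-7) n0(2) unfolding friedrichs_cos_le_def n1_def by blast
  moreover have "m \<bullet> n0 = 0" "n1 \<bullet> n0 = 0"
    using assms(7) n0 unfolding n1_def by (auto simp: orthogonal_comp_iff)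
  then have "(norm (m + n))\<^sup>2 = (norm m)\<^sup>2 + 2 * (m \<bullet> n1) + (norm n1)\<^sup>2 + (norm n0)\<^sup>2"
    unfolding power2_norm_eq_inner n1_def
    by (simp add: inner_add_left inner_add_right inner_diff_left inner_diff_right inner_commute)
  moreover have "0 \<le> (norm n1 - c * norm m)\<^sup>2" by simp
  ultimately show ?thesis
    by (simp add: power2_eq_square algebra_simps)
qed

lemma inner_set_plus_le_norm_projection:
  fixes M N :: "'a::{real_inner,complete_space} set"
  assumes "subspace M" "closed M" "subspace N" "closed N" "friedrichs_cos_le M N c" "\<bar>c\<bar> \<le> 1"
    and "y \<in> N\<^sup>\<bottom>" "p \<in> M" "y - p \<in> M\<^sup>\<bottom>" "t \<in> M + N"
  shows "sqrt (1 - c\<^sup>2) * (y \<bullet> t) \<le> norm p * norm t"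
proof -
  let ?s = "sqrt (1 - c\<^sup>2)"
  have "c\<^sup>2 \<le> 1" using assms(6) by (simp add: abs_square_le_1)
  obtain a b where "t = a + b" "a \<in> M" "b \<in> N" using assms(10) by (rule set_plus_elim)
  obtain a0 where a0: "a0 \<in> M \<inter> N" "a - a0 \<in> (M \<inter> N)\<^sup>\<bottom>"
    using orthogonal_projection_exists[of "M \<inter> N"] assms(1-4) by (blast intro: subspace_inter)
  define m where "m = a - a0"
  define n where "n = b + a0"
  have "m \<in> M" "n \<in> N" "t = m + n"
    using \<open>a \<in> M\<close> \<open>b \<in> N\<close> \<open>t = a + b\<close> a0(1) assms(1,3)
    unfolding m_def n_def by (auto intro: subspace_diff subspace_add)
  have "(?s * norm m)\<^sup>2 \<le> (norm t)\<^sup>2"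
    using friedrichs_norm_add_lower_bound[OF assms(1-5) \<open>m \<in> M\<close> _ \<open>n \<in> N\<close>] a0(2) \<open>c\<^sup>2 \<le> 1\<close>
    unfolding m_def \<open>t = m + n\<close> by (simp add: power_mult_distrib)
  then have "?s * norm m \<le> norm t" by (rule power2_le_imp_le) simp
  have "y \<bullet> n = 0" "(y - p) \<bullet> m = 0"
    using assms(7,9) \<open>m \<in> M\<close> \<open>n \<in> N\<close> by (auto simp: orthogonal_comp_iff)
  then have "y \<bullet> t = p \<bullet> m"
    unfolding \<open>t = m + n\<close> by (simp add: inner_add_right inner_diff_left)
  also have "\<dots> \<le> norm p * norm m" by (rule norm_cauchy_schwarz)
  finally have "?s * (y \<bullet> t) \<le> ?s * (norm p * norm m)"
    by (rule mult_left_mono) (use \<open>c\<^sup>2 \<le> 1\<close> in simp)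
  also have "\<dots> = norm p * (?s * norm m)" by (simp add: mult_ac)
  also have "\<dots> \<le> norm p * norm t" using \<open>?s * norm m \<le> norm t\<close> by (simp add: mult_left_mono)
  finally show ?thesis .
qed

lemma norm_projection_lower_bound:
  fixes M N :: "'a::{real_inner,complete_space} set"
  assumes "subspace M" "closed M" "subspace N" "closed N" "friedrichs_cos_le M N c" "\<bar>c\<bar> \<le> 1"
    and "y \<in> N\<^sup>\<bottom>" "y \<in> closure (M + N)" "p \<in> M" "y - p \<in> M\<^sup>\<bottom>"
  shows "sqrt (1 - c\<^sup>2) * norm y \<le> norm p"
proof -
  let ?s = "sqrt (1 - c\<^sup>2)"
  obtain t where t: "\<And>k. t k \<in> M + N" "t \<longlonglongrightarrow> y"
    using assms(8) by (auto simp: closure_sequential)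
  have bound: "?s * (y \<bullet> t k) \<le> norm p * norm (t k)" for k
    by (rule inner_set_plus_le_norm_projection[OF assms(1-7,9,10) t(1)])
  have "(\<lambda>k. ?s * (y \<bullet> t k)) \<longlonglongrightarrow> ?s * (y \<bullet> y)" "(\<lambda>k. norm p * norm (t k)) \<longlonglongrightarrow> norm p * norm y"
    by (intro tendsto_intros t(2))+
  then have "?s * (y \<bullet> y) \<le> norm p * norm y"
    by (rule LIMSEQ_le) (use bound in auto)
  moreover have "y \<bullet> y = norm y * norm y" by (simp flip: power2_eq_square power2_norm_eq_inner)
  ultimately have "(?s * norm y) * norm y \<le> norm p * norm y" by (simp add: mult.assoc)
  then show ?thesis by (cases "y = 0") (simp_all add: mult_le_cancel_right)
qed

text \<open>The Friedrichs angle between \<open>M\<^sup>\<bottom>\<close> and \<open>N\<^sup>\<bottom>\<close> is at least the one between \<open>M\<close>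
  and \<open>N\<close>; only \<open>y\<close> needs to be orthogonal to \<open>M\<^sup>\<bottom> \<inter> N\<^sup>\<bottom>\<close>.\<close>

lemma inner_orthogonal_comp_le:
  fixes M N :: "'a::{real_inner,complete_space} set"
  assumes "subspace M" "closed M" "subspace N" "closed N" "friedrichs_cos_le M N c" "0 \<le> c" "c \<le> 1"
    and "x \<in> M\<^sup>\<bottom>" "y \<in> N\<^sup>\<bottom>" "y \<in> (M\<^sup>\<bottom> \<inter> N\<^sup>\<bottom>)\<^sup>\<bottom>"
  shows "\<bar>x \<bullet> y\<bar> \<le> c * norm x * norm y"
proof -
  let ?s = "sqrt (1 - c\<^sup>2)"
  have "(M\<^sup>\<bottom> \<inter> N\<^sup>\<bottom>)\<^sup>\<bottom> = (M + N)\<^sup>\<bottom>\<^sup>\<bottom>"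
    using assms(1,3) by (simp add: orthogonal_comp_set_plus subspace_0)
  also have "\<dots> \<subseteq> closure (M + N)"
    using assms(1,3) by (intro orthogonal_comp_orthogonal_comp_subset_closure subspace_set_plus)
  finally have "y \<in> closure (M + N)" using assms(10) by blast
  obtain p where p: "p \<in> M" "y - p \<in> M\<^sup>\<bottom>" using orthogonal_projection_exists[OF assms(1,2)] .
  have "(?s * norm y)\<^sup>2 \<le> (norm p)\<^sup>2"
    using norm_projection_lower_bound[OF assms(1-5) _ assms(9) \<open>y \<in> closure (M + N)\<close> p] assms(6,7)
    by (intro power_mono) (auto simp: abs_square_le_1)
  moreover have "?s\<^sup>2 = 1 - c\<^sup>2" using assms(6,7) by (simp add: abs_square_le_1)
  moreover have "(norm (y - p))\<^sup>2 = (norm y)\<^sup>2 - (norm p)\<^sup>2"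
    using p unfolding power2_norm_eq_inner
    by (simp add: orthogonal_comp_iff inner_diff_left inner_diff_right inner_commute)
  ultimately have "(norm (y - p))\<^sup>2 \<le> (c * norm y)\<^sup>2" by (simp add: power_mult_distrib algebra_simps)
  then have "norm (y - p) \<le> c * norm y" by (rule power2_le_imp_le) (use assms(6) in simp)
  have "\<bar>x \<bullet> y\<bar> = \<bar>x \<bullet> (y - p)\<bar>" using assms(8) p(1) by (simp add: orthogonal_comp_iff inner_diff_right)
  also have "\<dots> \<le> norm x * norm (y - p)" by (rule Cauchy_Schwarz_ineq2)
  also have "\<dots> \<le> norm x * (c * norm y)"
    using \<open>norm (y - p) \<le> c * norm y\<close> by (simp add: mult_left_mono)
  finally show ?thesis by (simp add: mult.assoc mult.left_commute)
qed

section \<open>The quadratic form of the angle matrix\<close>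

lemma quadratic_form_le_inverse:
  fixes M :: "real^'n^'n" and d y :: "real^'n"
  assumes "invertible M" "transpose M = M" "\<And>x. 0 \<le> x \<bullet> (M *v x)"
  shows "2 * (d \<bullet> y) - y \<bullet> (M *v y) \<le> d \<bullet> (matrix_inv M *v d)"
proof -
  define z where "z = matrix_inv M *v d"
  have "M ** matrix_inv M = mat 1"
    using assms(1) unfolding invertible_def matrix_inv_def by (rule someI2_ex) auto
  then have Mz: "M *v z = d" by (simp add: z_def matrix_vector_mul_assoc)
  have sym: "x \<bullet> (M *v w) = w \<bullet> (M *v x)" for x w
    by (metis assms(2) dot_lmul_matrix inner_commute vector_transpose_matrix)
  have "0 \<le> (z - y) \<bullet> (M *v (z - y))" by (rule assms(3))
  also have "\<dots> = d \<bullet> z - 2 * (d \<bullet> y) + y \<bullet> (M *v y)"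
    using sym[of y z] by (simp add: matrix_vector_mult_diff_distrib inner_diff_left inner_diff_right Mz inner_commute)
  finally show ?thesis by (simp add: z_def inner_commute)
qed

lemma quadratic_form_3x3:
  fixes a b c :: real and x :: "real^3"
  shows "x \<bullet> (vector [vector [1, - a, - b], vector [- a, 1, - c], vector [- b, - c, 1]] *v x)
    = (x$1)\<^sup>2 + (x$2)\<^sup>2 + (x$3)\<^sup>2 - 2*a*(x$1)*(x$2) - 2*b*(x$1)*(x$3) - 2*c*(x$2)*(x$3)"
  by (simp add: inner_vec_def matrix_vector_mult_def sum_3 power2_eq_square algebra_simps)

lemma quadratic_form_3x3_nonneg:
  fixes a b c w1 w2 w3 :: real
  assumes "0 \<le> a" "0 \<le> b" "0 \<le> c" "a\<^sup>2 + b\<^sup>2 + c\<^sup>2 + 2*a*b*c < 1"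
  shows "0 \<le> w1\<^sup>2 + w2\<^sup>2 + w3\<^sup>2 - 2*a*w1*w2 - 2*b*w1*w3 - 2*c*w2*w3"
proof -
  define A where "A = 1 - a\<^sup>2"
  define B where "B = c + a*b"
  define C where "C = 1 - b\<^sup>2"
  have "0 < A" unfolding A_def using assms by (smt (verit) mult_nonneg_nonneg zero_le_power2)
  have "0 \<le> A*C - B\<^sup>2"
    using assms(4) unfolding A_def B_def C_def by (simp add: power2_eq_square algebra_simps)
  have "0 \<le> (A*w2 - B*w3)\<^sup>2 + (A*C - B\<^sup>2)*w3\<^sup>2" using \<open>0 \<le> A*C - B\<^sup>2\<close> by simp
  also have "\<dots> = A * (A*w2\<^sup>2 + C*w3\<^sup>2 - 2*B*w2*w3)" by (simp add: power2_eq_square algebra_simps)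
  finally have "0 \<le> A*w2\<^sup>2 + C*w3\<^sup>2 - 2*B*w2*w3"
    using \<open>0 < A\<close> by (simp add: zero_le_mult_iff)
  moreover have "w1\<^sup>2 + w2\<^sup>2 + w3\<^sup>2 - 2*a*w1*w2 - 2*b*w1*w3 - 2*c*w2*w3
      = (w1 - a*w2 - b*w3)\<^sup>2 + (A*w2\<^sup>2 + C*w3\<^sup>2 - 2*B*w2*w3)"
    unfolding A_def B_def C_def by (simp add: power2_eq_square algebra_simps)
  ultimately show ?thesis by simp
qed

lemma quadratic_form_3x3_le_inverse:
  fixes a b c y1 y2 y3 :: real and d :: "real^3"
  defines "M \<equiv> vector [vector [1, - a, - b], vector [- a, 1, - c], vector [- b, - c, 1]] :: real^3^3"
  assumes "0 \<le> a" "0 \<le> b" "0 \<le> c" "a\<^sup>2 + b\<^sup>2 + c\<^sup>2 + 2*a*b*c < 1"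
  shows "2 * (d$1*y1 + d$2*y2 + d$3*y3) - (y1\<^sup>2 + y2\<^sup>2 + y3\<^sup>2 - 2*a*y1*y2 - 2*b*y1*y3 - 2*c*y2*y3)
    \<le> d \<bullet> (matrix_inv M *v d)"
proof -
  have "det M = 1 - (a\<^sup>2 + b\<^sup>2 + c\<^sup>2 + 2*a*b*c)"
    unfolding M_def by (simp add: det_3 power2_eq_square algebra_simps)
  then have "invertible M" using assms(5) by (simp add: invertible_det_nz)
  moreover have "transpose M = M"
    unfolding M_def by (simp add: transpose_def vec_eq_iff forall_3)
  moreover have "0 \<le> x \<bullet> (M *v x)" for x
    unfolding M_def quadratic_form_3x3 by (rule quadratic_form_3x3_nonneg[OF assms(2-5)])
  ultimately have "2 * (d \<bullet> vector [y1, y2, y3]) - vector [y1, y2, y3] \<bullet> (M *v vector [y1, y2, y3])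
      \<le> d \<bullet> (matrix_inv M *v d)"
    by (rule quadratic_form_le_inverse)
  then show ?thesis unfolding M_def quadratic_form_3x3 by (simp add: inner_vec_def sum_3)
qed

section \<open>Distance to the intersection of three subspaces\<close>

lemma orthogonal_comp_Int3_subset_closure:
  fixes V1 V2 V3 :: "'a::{real_inner,complete_space} set"
  assumes "subspace V1" "closed V1" "subspace V2" "closed V2" "subspace V3" "closed V3"
  shows "(V1 \<inter> V2 \<inter> V3)\<^sup>\<bottom> \<subseteq> closure (V1\<^sup>\<bottom> + V2\<^sup>\<bottom> + V3\<^sup>\<bottom>)"
proof -
  have zero: "0 \<in> V1\<^sup>\<bottom>" "0 \<in> V2\<^sup>\<bottom>" "0 \<in> V3\<^sup>\<bottom>" "0 \<in> V1\<^sup>\<bottom> + V2\<^sup>\<bottom>"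
    using set_plus_intro[of 0 "V1\<^sup>\<bottom>" 0 "V2\<^sup>\<bottom>"] by (auto simp: orthogonal_comp_iff)
  have "V1 \<inter> V2 \<inter> V3 = V1\<^sup>\<bottom>\<^sup>\<bottom> \<inter> V2\<^sup>\<bottom>\<^sup>\<bottom> \<inter> V3\<^sup>\<bottom>\<^sup>\<bottom>"
    using assms by (simp add: orthogonal_comp_orthogonal_comp)
  also have "\<dots> = (V1\<^sup>\<bottom> + V2\<^sup>\<bottom> + V3\<^sup>\<bottom>)\<^sup>\<bottom>"
    using zero by (simp add: orthogonal_comp_set_plus)
  finally have "(V1 \<inter> V2 \<inter> V3)\<^sup>\<bottom> = (V1\<^sup>\<bottom> + V2\<^sup>\<bottom> + V3\<^sup>\<bottom>)\<^sup>\<bottom>\<^sup>\<bottom>" by simp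
  also have "\<dots> \<subseteq> closure (V1\<^sup>\<bottom> + V2\<^sup>\<bottom> + V3\<^sup>\<bottom>)"
    by (intro orthogonal_comp_orthogonal_comp_subset_closure subspace_set_plus subspace_orthogonal_comp)
  finally show ?thesis .
qed

text \<open>The orthogonality conditions make \<open>inner_orthogonal_comp_le\<close> applicable to the pairs
  \<open>(y1, y2)\<close>, \<open>(y1, y3)\<close> and \<open>(y3, y2)\<close> when \<open>Pi = Vi\<^sup>\<bottom>\<close>.\<close>

definition normalized_sums :: "'a::real_inner set \<Rightarrow> 'a set \<Rightarrow> 'a set \<Rightarrow> 'a set" where
  "normalized_sums P1 P2 P3 = {y1 + y2 + y3 | y1 y2 y3. y1 \<in> P1
      \<and> y2 \<in> P2 \<inter> (P1 \<inter> P2)\<^sup>\<bottom> \<inter> (P3 \<inter> P2)\<^sup>\<bottom> \<and> y3 \<in> P3 \<inter> (P1 \<inter> P3)\<^sup>\<bottom>}"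

lemma set_plus_subset_closure_normalized_sums:
  fixes P1 P2 P3 :: "'a::{real_inner,complete_space} set"
  assumes "subspace P1" "closed P1" "subspace P2" "closed P2" "subspace P3" "closed P3"
  shows "P1 + P2 + P3 \<subseteq> closure (normalized_sums P1 P2 P3)"
proof
  fix x assume "x \<in> P1 + P2 + P3"
  then obtain x1 x2 x3 where x: "x = x1 + x2 + x3" "x1 \<in> P1" "x2 \<in> P2" "x3 \<in> P3"
    by (metis set_plus_elim)
  let ?A = "P1 \<inter> P2" and ?B = "P3 \<inter> P2" and ?D = "P1 \<inter> P3"
  let ?C = "closure (?A + ?B)"
  have sub: "subspace ?A" "subspace ?B" "subspace ?D" "closed ?D"
    using assms by (auto intro: subspace_inter)
  have "?C \<subseteq> P2"
    using assms(3,4) by (intro closure_minimal subspace_sum_minimal) auto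
  have "?A \<subseteq> ?C" "?B \<subseteq> ?C"
    using set_plus_subset_left[OF subspace_0[OF sub(2)], of ?A] set_zero_plus2[OF subspace_0[OF sub(1)], of ?B]
      closure_subset by blast+
  obtain q where q: "q \<in> ?C" "x2 - q \<in> ?C\<^sup>\<bottom>"
    using orthogonal_projection_exists[of ?C] subspace_closure[OF subspace_set_plus] sub by blast
  show "x \<in> closure (normalized_sums P1 P2 P3)"
    unfolding closure_approachable
  proof (intro allI impI)
    fix e :: real assume "e > 0"
    then obtain t where "t \<in> ?A + ?B" "dist t q < e"
      using q(1) closure_approachable by blast
    then obtain a b where ab: "t = a + b" "a \<in> ?A" "b \<in> ?B" by (metis set_plus_elim)
    obtain r where r: "r \<in> ?D" "x3 + b - r \<in> ?D\<^sup>\<bottom>"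
      using orthogonal_projection_exists[of ?D] sub by blast
    have "x1 + a + r \<in> P1" "x3 + b - r \<in> P3" "x2 - q \<in> P2"
      using x ab r assms \<open>q \<in> ?C\<close> \<open>?C \<subseteq> P2\<close> by (auto intro!: subspace_add subspace_diff)
    moreover have "x2 - q \<in> ?A\<^sup>\<bottom> \<inter> ?B\<^sup>\<bottom>"
      using q(2) \<open>?A \<subseteq> ?C\<close> \<open>?B \<subseteq> ?C\<close> orthogonal_comp_anti_mono by blast
    ultimately have "(x1 + a + r) + (x2 - q) + (x3 + b - r) \<in> normalized_sums P1 P2 P3"
      using r(2) unfolding normalized_sums_def by blast
    moreover have "dist ((x1 + a + r) + (x2 - q) + (x3 + b - r)) x = dist t q"
      by (simp add: x ab dist_norm algebra_simps)
    ultimately show "\<exists>y\<in>normalized_sums P1 P2 P3. dist y x < e" using \<open>dist t q < e\<close> by metis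
  qed
qed

lemma two_inner_minus_norm_sq_le:
  fixes V1 V2 V3 :: "'a::real_inner set" and v y1 y2 y3 :: 'a and c12 c13 c23 :: real
  defines "d \<equiv> vector [infdist v V1, infdist v V2, infdist v V3] :: real^3"
    and "M \<equiv> vector [vector [1, - c12, - c13], vector [- c12, 1, - c23], vector [- c13, - c23, 1]] :: real^3^3"
  assumes "V1 \<noteq> {}" "V2 \<noteq> {}" "V3 \<noteq> {}" "y1 \<in> V1\<^sup>\<bottom>" "y2 \<in> V2\<^sup>\<bottom>" "y3 \<in> V3\<^sup>\<bottom>"
    and "\<bar>y1 \<bullet> y2\<bar> \<le> c12 * norm y1 * norm y2" "\<bar>y1 \<bullet> y3\<bar> \<le> c13 * norm y1 * norm y3"
    and "\<bar>y2 \<bullet> y3\<bar> \<le> c23 * norm y2 * norm y3"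
    and "0 \<le> c12" "0 \<le> c13" "0 \<le> c23" "c12\<^sup>2 + c13\<^sup>2 + c23\<^sup>2 + 2 * c12 * c13 * c23 < 1"
  shows "2 * (v \<bullet> (y1 + y2 + y3)) - (norm (y1 + y2 + y3))\<^sup>2 \<le> d \<bullet> (matrix_inv M *v d)"
proof -
  have "v \<bullet> y1 \<le> infdist v V1 * norm y1" "v \<bullet> y2 \<le> infdist v V2 * norm y2"
    "v \<bullet> y3 \<le> infdist v V3 * norm y3"
    using assms(3-8) by (simp_all add: inner_le_infdist_mult_norm)
  moreover have "(norm (y1 + y2 + y3))\<^sup>2
      = (norm y1)\<^sup>2 + (norm y2)\<^sup>2 + (norm y3)\<^sup>2 + 2 * (y1 \<bullet> y2) + 2 * (y1 \<bullet> y3) + 2 * (y2 \<bullet> y3)"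
    unfolding power2_norm_eq_inner by (simp add: inner_add_left inner_add_right inner_commute)
  moreover have "2 * (d$1 * norm y1 + d$2 * norm y2 + d$3 * norm y3)
      - ((norm y1)\<^sup>2 + (norm y2)\<^sup>2 + (norm y3)\<^sup>2 - 2 * c12 * norm y1 * norm y2
         - 2 * c13 * norm y1 * norm y3 - 2 * c23 * norm y2 * norm y3) \<le> d \<bullet> (matrix_inv M *v d)"
    unfolding M_def using assms(12-15) by (rule quadratic_form_3x3_le_inverse)
  ultimately show ?thesis
    using assms(9-11) unfolding d_def inner_add_right by (simp add: abs_le_iff mult.assoc)
qed

lemma two_inner_minus_norm_sq_le_normalized_sums:
  fixes V1 V2 V3 :: "'a::{real_inner,complete_space} set" and v :: 'a and c12 c13 c23 :: real
  defines "d \<equiv> vector [infdist v V1, infdist v V2, infdist v V3] :: real^3"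
    and "M \<equiv> vector [vector [1, - c12, - c13], vector [- c12, 1, - c23], vector [- c13, - c23, 1]] :: real^3^3"
  assumes "subspace V1" "closed V1" "subspace V2" "closed V2" "subspace V3" "closed V3"
    and "friedrichs_cos_le V1 V2 c12" "friedrichs_cos_le V1 V3 c13" "friedrichs_cos_le V2 V3 c23"
    and "0 \<le> c12" "0 \<le> c13" "0 \<le> c23" "c12\<^sup>2 + c13\<^sup>2 + c23\<^sup>2 + 2 * c12 * c13 * c23 < 1"
    and "s \<in> normalized_sums (V1\<^sup>\<bottom>) (V2\<^sup>\<bottom>) (V3\<^sup>\<bottom>)"
  shows "2 * (v \<bullet> s) - (norm s)\<^sup>2 \<le> d \<bullet> (matrix_inv M *v d)"
proof -
  obtain y1 y2 y3 where s: "s = y1 + y2 + y3" "y1 \<in> V1\<^sup>\<bottom>" "y2 \<in> V2\<^sup>\<bottom>" "y3 \<in> V3\<^sup>\<bottom>"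
    and y2: "y2 \<in> (V1\<^sup>\<bottom> \<inter> V2\<^sup>\<bottom>)\<^sup>\<bottom>" "y2 \<in> (V3\<^sup>\<bottom> \<inter> V2\<^sup>\<bottom>)\<^sup>\<bottom>" and y3: "y3 \<in> (V1\<^sup>\<bottom> \<inter> V3\<^sup>\<bottom>)\<^sup>\<bottom>"
    using assms(16) unfolding normalized_sums_def by blast
  have "0 \<le> c12 * c13 * c23" using assms(12-14) by simp
  then have "c12\<^sup>2 < 1" "c13\<^sup>2 < 1" "c23\<^sup>2 < 1"
    using assms(15) zero_le_power2[of c12] zero_le_power2[of c13] zero_le_power2[of c23] by linarith+
  then have "c12 \<le> 1" "c13 \<le> 1" "c23 \<le> 1" by (simp_all add: abs_square_less_1 abs_less_iff)
  have "\<bar>y1 \<bullet> y2\<bar> \<le> c12 * norm y1 * norm y2"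
    using assms(3-6) assms(9,12) \<open>c12 \<le> 1\<close> s(2,3) y2(1) by (rule inner_orthogonal_comp_le)
  moreover have "\<bar>y1 \<bullet> y3\<bar> \<le> c13 * norm y1 * norm y3"
    using assms(3,4,7,8) assms(10,13) \<open>c13 \<le> 1\<close> s(2,4) y3 by (rule inner_orthogonal_comp_le)
  moreover have "\<bar>y3 \<bullet> y2\<bar> \<le> c23 * norm y3 * norm y2"
    using assms(7,8,5,6) friedrichs_cos_le_commute[OF assms(11)] assms(14) \<open>c23 \<le> 1\<close> s(4,3) y2(2)
    by (rule inner_orthogonal_comp_le)
  then have "\<bar>y2 \<bullet> y3\<bar> \<le> c23 * norm y2 * norm y3" by (simp add: inner_commute mult_ac)
  ultimately show ?thesis
    unfolding d_def M_def s(1) using assms(3,5,7) s(2-4) assms(12-15)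
    by (intro two_inner_minus_norm_sq_le) (auto dest: subspace_0)
qed

lemma infdist_Int3_sq_le:
  fixes V1 V2 V3 :: "'a::{real_inner,complete_space} set" and v :: 'a and c12 c13 c23 :: real
  defines "d \<equiv> vector [infdist v V1, infdist v V2, infdist v V3] :: real^3"
    and "M \<equiv> vector [vector [1, - c12, - c13], vector [- c12, 1, - c23], vector [- c13, - c23, 1]] :: real^3^3"
  assumes "subspace V1" "closed V1" "subspace V2" "closed V2" "subspace V3" "closed V3"
    and "friedrichs_cos_le V1 V2 c12" "friedrichs_cos_le V1 V3 c13" "friedrichs_cos_le V2 V3 c23"
    and "0 \<le> c12" "0 \<le> c13" "0 \<le> c23" "c12\<^sup>2 + c13\<^sup>2 + c23\<^sup>2 + 2 * c12 * c13 * c23 < 1"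
  shows "(infdist v (V1 \<inter> V2 \<inter> V3))\<^sup>2 \<le> d \<bullet> (matrix_inv M *v d)"
proof -
  let ?W = "V1 \<inter> V2 \<inter> V3" and ?S = "normalized_sums (V1\<^sup>\<bottom>) (V2\<^sup>\<bottom>) (V3\<^sup>\<bottom>)"
  let ?Q = "d \<bullet> (matrix_inv M *v d)"
  obtain p where p: "p \<in> ?W" "v - p \<in> ?W\<^sup>\<bottom>"
    using orthogonal_projection_exists[of ?W] assms(3-8) by (blast intro: subspace_inter)
  have "?W\<^sup>\<bottom> \<subseteq> closure (V1\<^sup>\<bottom> + V2\<^sup>\<bottom> + V3\<^sup>\<bottom>)"
    by (rule orthogonal_comp_Int3_subset_closure[OF assms(3-8)])
  also have "\<dots> \<subseteq> closure (closure ?S)"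
    by (intro closure_mono set_plus_subset_closure_normalized_sums subspace_orthogonal_comp
        closed_orthogonal_comp)
  finally have "v - p \<in> closure ?S" using p(2) by auto
  then obtain s where s: "\<And>k. s k \<in> ?S" "s \<longlonglongrightarrow> v - p"
    by (auto simp: closure_sequential)
  have "(norm (v - p))\<^sup>2 \<le> ?Q + (norm (v - p - s k))\<^sup>2" for k
  proof -
    have "s k \<bullet> p = 0"
      using s(1)[of k] p(1) unfolding normalized_sums_def by (auto simp: orthogonal_comp_iff inner_add_left)
    then have "(norm (v - p))\<^sup>2 - (norm (v - p - s k))\<^sup>2 = 2 * (v \<bullet> s k) - (norm (s k))\<^sup>2"
      unfolding power2_norm_eq_inner by (simp add: inner_diff_left inner_diff_right inner_commute)
    also have "\<dots> \<le> ?Q"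
      unfolding d_def M_def using assms(3-15) s(1) by (rule two_inner_minus_norm_sq_le_normalized_sums)
    finally show ?thesis by simp
  qed
  moreover have "(\<lambda>k. ?Q + (norm (v - p - s k))\<^sup>2) \<longlonglongrightarrow> ?Q"
    using tendsto_add[OF tendsto_const tendsto_power[OF tendsto_norm[OF LIM_zero[OF s(2)]], of 2]]
    by (simp add: norm_minus_commute)
  ultimately have "(norm (v - p))\<^sup>2 \<le> ?Q" by (intro LIMSEQ_le_const) auto
  moreover have "infdist v ?W \<le> norm (v - p)" using infdist_le[OF p(1)] by (simp add: dist_norm)
  ultimately show ?thesis by (meson infdist_nonneg order_trans power_mono)
qed

theorem lemma4p3:
  fixes V1 V2 V3 :: "'a::{real_inner, complete_space} set"
    and a12 a13 a23 :: real
  assumes "closed_subspace V1" "closed_subspace V2" "closed_subspace V3"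
    and "\<not> V1 \<subseteq> V2" "\<not> V2 \<subseteq> V1"
    and "\<not> V1 \<subseteq> V3" "\<not> V3 \<subseteq> V1"
    and "\<not> V2 \<subseteq> V3" "\<not> V3 \<subseteq> V2"
    and "0 < a12" "a12 \<le> friedrichs_angle V1 V2"
    and "0 < a13" "a13 \<le> friedrichs_angle V1 V3"
    and "0 < a23" "a23 \<le> friedrichs_angle V2 V3"
    and "(cos a12)\<^sup>2 + (cos a23)\<^sup>2 + (cos a13)\<^sup>2 + 2 * cos a12 * cos a23 * cos a13 < 1"
  shows "\<forall>v. (infdist v (V1 \<inter> V2 \<inter> V3))\<^sup>2 \<le>
           (let d = (vector [infdist v V1, infdist v V2, infdist v V3] :: real^3);
                M = (vector [vector [1, - cos a12, - cos a13],
                             vector [- cos a12, 1, - cos a23],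
                             vector [- cos a13, - cos a23, 1]] :: real^3^3)
            in d \<bullet> (matrix_inv M *v d))"
proof -
  have V: "subspace V1" "closed V1" "subspace V2" "closed V2" "subspace V3" "closed V3"
    using assms(1-3) unfolding closed_subspace_def by auto
  have c12: "friedrichs_cos_le V1 V2 (cos a12)" "0 \<le> cos a12"
    using friedrichs_cos_le_cos[OF assms(1,2,4,5,10,11)] by auto
  have c13: "friedrichs_cos_le V1 V3 (cos a13)" "0 \<le> cos a13"
    using friedrichs_cos_le_cos[OF assms(1,3,6,7,12,13)] by auto
  have c23: "friedrichs_cos_le V2 V3 (cos a23)" "0 \<le> cos a23"
    using friedrichs_cos_le_cos[OF assms(2,3,8,9,14,15)] by auto
  have det: "(cos a12)\<^sup>2 + (cos a13)\<^sup>2 + (cos a23)\<^sup>2 + 2 * cos a12 * cos a13 * cos a23 < 1"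
    using assms(16) by (simp add: ac_simps)
  show ?thesis
    unfolding Let_def using infdist_Int3_sq_le[OF V c12(1) c13(1) c23(1) c12(2) c13(2) c23(2) det] by blast
qed

end
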